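(* Let $n$ be odd and let $0\le k,m\le n/2$. Let $N_n(k,m)$ be the number of reduced Latin squares of order $n$ of parity type $(k,m)$. Then the number of even reduced Latin squares of order $n$ of parity type $(k,m)$ equals $$\frac{km+(n-k)(n-m)}{n^2}N_n(k,m)\quad\text{if } k\equiv m \pmod 2,$$ and $$\frac{k(n-m)+m(n-k)}{n^2}N_n(k,m)\quad\text{if } k\not\equiv m \pmod 2.$$
   Context: A Latin square of order $n$ is an $n\times n$ array with entries in $[n]$, each symbol once in each row and column. Rows and columns are viewed as permutations: if symbol $i$ appears in the $j$th place of a row (column) $\sigma$, then $\sigma(i)=j$. $L$ is reduced if its first row and first column are the identity permutation. $\mathrm{par}(L)$ is the product of the signs of all rows and columns of $L$; $L$ is even if $\mathrm{par}(L)=1$. The parity type of $L$ is $(k,m)$, $0\le k,m\le n/2$, if $k$ of its rows have one sign and the other $n-k$ rows the opposite sign, and $m$ of its columns have one sign and the other $n-m$ columns the opposite sign. *)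

theory Defs
  imports Complex_Main "HOL-Combinatorics.Permutations"
begin

text \<open>Convention: a Latin square of order n is a function L :: nat => nat => nat,
  L i j = symbol in row i, column j, with rows, columns and symbols indexed by
  0..n-1 (instead of 1..n), and L i j = 0 outside the n x n array (extensionality,
  so that the set of Latin squares of order n is finite).\<close>

definition latin_square :: "nat \<Rightarrow> (nat \<Rightarrow> nat \<Rightarrow> nat) \<Rightarrow> bool" where
  "latin_square n L \<longleftrightarrow>
     (\<forall>i j. (n \<le> i \<or> n \<le> j) \<longrightarrow> L i j = 0) \<and>
     (\<forall>i<n. bij_betw (\<lambda>j. L i j) {..<n} {..<n}) \<and>
     (\<forall>j<n. bij_betw (\<lambda>i. L i j) {..<n} {..<n})"

definition reduced_latin_square :: "nat \<Rightarrow> (nat \<Rightarrow> nat \<Rightarrow> nat) \<Rightarrow> bool" where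
  "reduced_latin_square n L \<longleftrightarrow> latin_square n L \<and>
     (\<forall>j<n. L 0 j = j) \<and> (\<forall>i<n. L i 0 = i)"

definition row_perm :: "nat \<Rightarrow> (nat \<Rightarrow> nat \<Rightarrow> nat) \<Rightarrow> nat \<Rightarrow> nat \<Rightarrow> nat" where
  "row_perm n L i = (\<lambda>s. if s < n then (THE j. j < n \<and> L i j = s) else s)"

definition col_perm :: "nat \<Rightarrow> (nat \<Rightarrow> nat \<Rightarrow> nat) \<Rightarrow> nat \<Rightarrow> nat \<Rightarrow> nat" where
  "col_perm n L j = (\<lambda>s. if s < n then (THE i. i < n \<and> L i j = s) else s)"

definition par :: "nat \<Rightarrow> (nat \<Rightarrow> nat \<Rightarrow> nat) \<Rightarrow> int" where
  "par n L = (\<Prod>i<n. sign (row_perm n L i)) * (\<Prod>j<n. sign (col_perm n L j))"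

definition even_latin_square :: "nat \<Rightarrow> (nat \<Rightarrow> nat \<Rightarrow> nat) \<Rightarrow> bool" where
  "even_latin_square n L \<longleftrightarrow> par n L = 1"

text \<open>Parity type (k,m): k rows have one sign and the other n-k rows the opposite sign
  (i.e. the number of even rows is k or n-k), and likewise for columns with m.\<close>
definition parity_type :: "nat \<Rightarrow> (nat \<Rightarrow> nat \<Rightarrow> nat) \<Rightarrow> nat \<Rightarrow> nat \<Rightarrow> bool" where
  "parity_type n L k m \<longleftrightarrow>
     card {i. i < n \<and> sign (row_perm n L i) = (1::int)} \<in> {k, n - k} \<and>
     card {j. j < n \<and> sign (col_perm n L j) = (1::int)} \<in> {m, n - m}"

end

theory Submission
  imports Defs
begin

text \<open>
  Let \<open>Y(r, c)\<close> be the set of Latin squares with \<open>r\<close> even rows and \<open>c\<close> even columns and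
  \<open>B(r, c)\<close> its reduced members. Permuting rows by \<open>p\<close>, columns by \<open>q\<close> and symbols by \<open>l\<close>
  multiplies every row sign by \<open>sign l * sign q\<close> and every column sign by \<open>sign l * sign p\<close>.
  A Latin square whose first row and first column are even is, in exactly one way, obtained from
  a reduced one by an even row permutation fixing \<open>0\<close> and an even symbol permutation; and for
  \<open>n \<noteq> 2\<close> the even permutations move \<open>0\<close> to any position. Double counting triples
  (square, even row, even column) therefore gives \<open>n\<^sup>2 K |B(r, c)| = r c |Y(r, c)|\<close> with \<open>K\<close>
  independent of \<open>r\<close> and \<open>c\<close>. Swapping two columns (rows) replaces \<open>r\<close> by \<open>n - r\<close>
  (\<open>c\<close> by \<open>n - c\<close>), so \<open>|Y(r, c)|\<close> is the same for the four types
  \<open>(r, c) \<in> {k, n - k} \<times> {m, n - m}\<close> making up parity type \<open>(k, m)\<close>. A square is even iff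
  \<open>r + c\<close> is even, so the even squares of parity type \<open>(k, m)\<close> are the fraction
  \<open>(\<Sum>r c over the even types) / (\<Sum>r c over all four types)\<close>, and the denominator is
  \<open>(k + (n - k)) (m + (n - m)) = n\<^sup>2\<close>.
\<close>

section \<open>Rows and columns as permutations\<close>

definition row_fun :: "nat \<Rightarrow> (nat \<Rightarrow> nat \<Rightarrow> nat) \<Rightarrow> nat \<Rightarrow> nat \<Rightarrow> nat" where
  "row_fun n L i = (\<lambda>j. if j < n then L i j else j)"

definition transposed :: "('a \<Rightarrow> 'a \<Rightarrow> 'b) \<Rightarrow> 'a \<Rightarrow> 'a \<Rightarrow> 'b" where
  "transposed L = (\<lambda>i j. L j i)"

lemma latin_square_transposed [simp]: "latin_square n (transposed L) \<longleftrightarrow> latin_square n L"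
  by (auto simp: latin_square_def transposed_def)

lemma col_perm_eq_row_perm_transposed: "col_perm n L = row_perm n (transposed L)"
  by (simp add: col_perm_def row_perm_def transposed_def fun_eq_iff)

lemma permutes_lessThan_permutation [intro]: "p permutes {..<n::nat} \<Longrightarrow> permutation p"
  by (rule permutes_imp_permutation) simp_all

lemma permutes_lessThan_less: "p permutes {..<n::nat} \<Longrightarrow> i < n \<Longrightarrow> p i < n"
  using permutes_in_image[of p "{..<n}" i] by simp

lemma row_fun_permutes:
  assumes "latin_square n L" "i < n"
  shows "row_fun n L i permutes {..<n}"
proof (rule bij_imp_permutes)
  have "bij_betw (\<lambda>j. L i j) {..<n} {..<n}"
    using assms by (simp add: latin_square_def)
  then show "bij_betw (row_fun n L i) {..<n} {..<n}"
    by (rule bij_betw_cong[THEN iffD1, rotated]) (simp add: row_fun_def)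
qed (simp add: row_fun_def)

lemma row_perm_eq_inv_row_fun:
  assumes L: "latin_square n L" and i: "i < n"
  shows "row_perm n L i = inv (row_fun n L i)"
proof
  fix s
  have perm: "row_fun n L i permutes {..<n}"
    using L i by (rule row_fun_permutes)
  show "row_perm n L i s = inv (row_fun n L i) s"
  proof (cases "s < n")
    case True
    let ?j = "inv (row_fun n L i) s"
    have j: "?j < n" "row_fun n L i ?j = s"
      using True permutes_in_image[OF permutes_inv[OF perm]] permutes_inverses(1)[OF perm] by auto
    have "(THE j. j < n \<and> L i j = s) = ?j"
    proof (rule the_equality)
      show "?j < n \<and> L i ?j = s"
        using j by (simp add: row_fun_def)
      show "j' = ?j" if "j' < n \<and> L i j' = s" for j'
        using that j permutes_inj[OF perm] by (metis injD row_fun_def)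
    qed
    then show ?thesis
      using True by (simp add: row_perm_def)
  next
    case False
    then show ?thesis
      using permutes_not_in[OF permutes_inv[OF perm]] by (simp add: row_perm_def)
  qed
qed

lemma sign_row_perm:
  "latin_square n L \<Longrightarrow> i < n \<Longrightarrow> sign (row_perm n L i) = sign (row_fun n L i)"
  by (simp add: row_perm_eq_inv_row_fun sign_inverse permutes_lessThan_permutation[OF row_fun_permutes])

section \<open>Isotopy\<close>

definition isotope :: "nat \<Rightarrow> (nat \<Rightarrow> nat) \<Rightarrow> (nat \<Rightarrow> nat) \<Rightarrow> (nat \<Rightarrow> nat) \<Rightarrow>
    (nat \<Rightarrow> nat \<Rightarrow> nat) \<Rightarrow> nat \<Rightarrow> nat \<Rightarrow> nat" where
  "isotope n p q l L = (\<lambda>i j. if i < n \<and> j < n then l (L (p i) (q j)) else 0)"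

lemma transposed_isotope: "transposed (isotope n p q l L) = isotope n q p l (transposed L)"
  by (auto simp: transposed_def isotope_def fun_eq_iff)

lemma latin_square_isotope:
  assumes L: "latin_square n L"
    and p: "p permutes {..<n}" and q: "q permutes {..<n}" and l: "l permutes {..<n}"
  shows "latin_square n (isotope n p q l L)"
  unfolding latin_square_def
proof (intro conjI allI impI)
  fix i assume i: "i < n"
  have "bij_betw (\<lambda>j. L (p i) j) {..<n} {..<n}"
    using L i permutes_lessThan_less[OF p] by (simp add: latin_square_def)
  then have "bij_betw (l \<circ> (\<lambda>j. L (p i) j) \<circ> q) {..<n} {..<n}"
    using q l by (intro bij_betw_trans[OF permutes_imp_bij[OF q]] bij_betw_trans[OF _ permutes_imp_bij[OF l]])
  then show "bij_betw (\<lambda>j. isotope n p q l L i j) {..<n} {..<n}"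
    by (rule bij_betw_cong[THEN iffD1, rotated]) (simp add: isotope_def i)
next
  fix j assume j: "j < n"
  have "bij_betw (\<lambda>i. L i (q j)) {..<n} {..<n}"
    using L j permutes_lessThan_less[OF q] by (simp add: latin_square_def)
  then have "bij_betw (l \<circ> (\<lambda>i. L i (q j)) \<circ> p) {..<n} {..<n}"
    using p l by (intro bij_betw_trans[OF permutes_imp_bij[OF p]] bij_betw_trans[OF _ permutes_imp_bij[OF l]])
  then show "bij_betw (\<lambda>i. isotope n p q l L i j) {..<n} {..<n}"
    by (rule bij_betw_cong[THEN iffD1, rotated]) (simp add: isotope_def j)
qed (auto simp: isotope_def)

lemma isotope_isotope:
  assumes "p permutes {..<n}" "q permutes {..<n}"
  shows "isotope n p q l (isotope n p' q' l' L) = isotope n (p' \<circ> p) (q' \<circ> q) (l \<circ> l') L"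
  using assms by (auto simp: isotope_def fun_eq_iff permutes_lessThan_less)

lemma isotope_id: "latin_square n L \<Longrightarrow> isotope n id id id L = L"
  by (auto simp: isotope_def fun_eq_iff latin_square_def)

lemma isotope_inv_isotope:
  assumes "latin_square n L"
    and "p permutes {..<n}" "q permutes {..<n}" "l permutes {..<n}"
  shows "isotope n (inv p) (inv q) (inv l) (isotope n p q l L) = L"
  using assms by (simp add: isotope_isotope permutes_inv permutes_inv_o isotope_id)

lemma inj_on_isotope:
  "p permutes {..<n} \<Longrightarrow> q permutes {..<n} \<Longrightarrow> l permutes {..<n} \<Longrightarrow>
    inj_on (isotope n p q l) {L. latin_square n L}"
  by (rule inj_on_inverseI[where g = "isotope n (inv p) (inv q) (inv l)"])
    (simp add: isotope_inv_isotope)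

lemma row_fun_isotope:
  assumes "q permutes {..<n}" "l permutes {..<n}" "i < n"
  shows "row_fun n (isotope n p q l L) i = l \<circ> row_fun n L (p i) \<circ> q"
  using assms by (auto simp: fun_eq_iff row_fun_def isotope_def permutes_lessThan_less permutes_not_in)

definition even_rows :: "nat \<Rightarrow> (nat \<Rightarrow> nat \<Rightarrow> nat) \<Rightarrow> nat set" where
  "even_rows n L = {i. i < n \<and> evenperm (row_fun n L i)}"

definition even_cols :: "nat \<Rightarrow> (nat \<Rightarrow> nat \<Rightarrow> nat) \<Rightarrow> nat set" where
  "even_cols n L = even_rows n (transposed L)"

lemma even_rows_subset: "even_rows n L \<subseteq> {..<n}"
  by (auto simp: even_rows_def)

lemma card_Collect_permutes:
  fixes n :: nat
  assumes "p permutes {..<n}"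
  shows "card {i. i < n \<and> P (p i)} = card {i. i < n \<and> P i}"
proof (rule bij_betw_same_card)
  show "bij_betw p {i. i < n \<and> P (p i)} {i. i < n \<and> P i}"
  proof (rule bij_betw_subset[OF permutes_imp_bij[OF assms]])
    show "p ` {i. i < n \<and> P (p i)} = {i. i < n \<and> P i}"
      using permutes_lessThan_less[OF assms] permutes_lessThan_less[OF permutes_inv[OF assms]]
        permutes_inverses(1)[OF assms]
      by (auto intro!: image_eqI[where x = "inv p _"])
  qed auto
qed

lemma card_Collect_not: "card {i. i < n \<and> \<not> P i} = n - card {i. i < n \<and> P i}"
proof -
  have "{i. i < n \<and> \<not> P i} = {..<n} - {i. i < n \<and> P i}"
    by auto
  then show ?thesis
    by (simp add: card_Diff_subset subset_eq)
qed

lemma in_even_rows_isotope: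
  assumes L: "latin_square n L"
    and p: "p permutes {..<n}" and q: "q permutes {..<n}" and l: "l permutes {..<n}"
    and i: "i < n"
  shows "i \<in> even_rows n (isotope n p q l L) \<longleftrightarrow> (p i \<in> even_rows n L \<longleftrightarrow> evenperm l = evenperm q)"
proof -
  have "permutation (row_fun n L (p i))"
    using row_fun_permutes[OF L permutes_lessThan_less[OF p i]] ..
  then show ?thesis
    using q l i permutes_lessThan_less[OF p i]
      permutes_lessThan_permutation[OF q] permutes_lessThan_permutation[OF l]
    by (auto simp: even_rows_def row_fun_isotope evenperm_comp permutation_compose)
qed

lemma in_even_cols_isotope:
  assumes "latin_square n L" "p permutes {..<n}" "q permutes {..<n}" "l permutes {..<n}" "j < n"
  shows "j \<in> even_cols n (isotope n p q l L) \<longleftrightarrow> (q j \<in> even_cols n L \<longleftrightarrow> evenperm l = evenperm p)"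
  using assms by (simp add: even_cols_def transposed_isotope in_even_rows_isotope)

lemma card_even_rows_isotope:
  assumes L: "latin_square n L"
    and p: "p permutes {..<n}" and q: "q permutes {..<n}" and l: "l permutes {..<n}"
  shows "card (even_rows n (isotope n p q l L)) =
    (if evenperm l = evenperm q then card (even_rows n L) else n - card (even_rows n L))"
proof -
  let ?e = "evenperm l = evenperm q"
  have "even_rows n (isotope n p q l L) = {i. i < n \<and> (p i \<in> even_rows n L \<longleftrightarrow> ?e)}"
    using in_even_rows_isotope[OF L p q l] even_rows_subset[of n "isotope n p q l L"] by auto
  then have "card (even_rows n (isotope n p q l L)) = card {i. i < n \<and> (i \<in> even_rows n L \<longleftrightarrow> ?e)}"
    using card_Collect_permutes[OF p, where P = "\<lambda>i. i \<in> even_rows n L \<longleftrightarrow> ?e"] by simp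
  also have "\<dots> = (if ?e then card (even_rows n L) else n - card (even_rows n L))"
    using card_Collect_not[of n "\<lambda>i. i \<in> even_rows n L"]
    by (auto simp: even_rows_def)
  finally show ?thesis .
qed

lemma card_even_cols_isotope:
  assumes "latin_square n L" "p permutes {..<n}" "q permutes {..<n}" "l permutes {..<n}"
  shows "card (even_cols n (isotope n p q l L)) =
    (if evenperm l = evenperm p then card (even_cols n L) else n - card (even_cols n L))"
  using assms by (simp add: even_cols_def transposed_isotope card_even_rows_isotope)

lemma sign_eq_1_iff: "sign p = (1::int) \<longleftrightarrow> evenperm p"
  by (simp add: sign_def)

lemma card_even_rows_le: "card (even_rows n L) \<le> n"
  using card_mono[OF _ even_rows_subset] by fastforce

lemma prod_sign:
  assumes "finite A"
  shows "(\<Prod>i\<in>A. sign (f i)) = (-1 :: int) ^ card {i \<in> A. \<not> evenperm (f i)}"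
proof -
  have "(\<Prod>i\<in>A. sign (f i)) = (\<Prod>i\<in>A. if evenperm (f i) then 1 else (-1::int))"
    by (simp add: sign_def)
  also have "\<dots> = (\<Prod>i\<in>{i \<in> A. \<not> evenperm (f i)}. -1)"
    using assms by (intro prod.mono_neutral_cong_right) auto
  finally show ?thesis
    by simp
qed

lemma prod_sign_row_perm:
  assumes "latin_square n L"
  shows "(\<Prod>i<n. sign (row_perm n L i)) = (-1) ^ (n - card (even_rows n L))"
proof -
  have "(\<Prod>i<n. sign (row_perm n L i)) = (\<Prod>i<n. sign (row_fun n L i))"
    using assms by (simp add: sign_row_perm)
  also have "\<dots> = (-1) ^ card {i. i < n \<and> \<not> evenperm (row_fun n L i)}"
    by (simp add: prod_sign)
  finally show ?thesis
    by (simp add: card_Collect_not even_rows_def)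
qed

lemma even_latin_square_iff:
  assumes "latin_square n L"
  shows "even_latin_square n L \<longleftrightarrow> even (card (even_rows n L) + card (even_cols n L))"
proof -
  have "par n L = (-1) ^ ((n - card (even_rows n L)) + (n - card (even_cols n L)))"
    using assms by (simp add: par_def col_perm_eq_row_perm_transposed even_cols_def
      prod_sign_row_perm power_add)
  then have "even_latin_square n L \<longleftrightarrow> even ((n - card (even_rows n L)) + (n - card (even_cols n L)))"
    by (simp add: even_latin_square_def minus_one_power_iff)
  moreover have "card (even_rows n L) \<le> n" "card (even_cols n L) \<le> n"
    by (simp_all add: card_even_rows_le even_cols_def)
  ultimately show ?thesis
    by (metis add_diff_cancel_left' diff_add_inverse2 even_add le_add_diff_inverse)
qed

lemma parity_type_iff:
  assumes "latin_square n L"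
  shows "parity_type n L k m \<longleftrightarrow>
    card (even_rows n L) \<in> {k, n - k} \<and> card (even_cols n L) \<in> {m, n - m}"
proof -
  have "{i. i < n \<and> sign (row_perm n L' i) = (1::int)} = even_rows n L'"
    if "latin_square n L'" for L'
    using that by (auto simp: even_rows_def sign_row_perm simp flip: sign_eq_1_iff)
  then show ?thesis
    using assms by (simp add: parity_type_def col_perm_eq_row_perm_transposed even_cols_def)
qed

section \<open>Counting squares by their numbers of even rows and columns\<close>

lemma finite_latin_squares: "finite {L. latin_square n L}"
proof -
  let ?restrict = "\<lambda>L. \<lambda>i\<in>{..<n}. \<lambda>j\<in>{..<n}. L i j"
  have "inj_on ?restrict {L. latin_square n L}"
  proof (rule inj_onI)
    fix L L'
    assume L: "L \<in> {L. latin_square n L}" and L': "L' \<in> {L. latin_square n L}"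
      and eq: "?restrict L = ?restrict L'"
    show "L = L'"
    proof (intro ext)
      fix i j
      show "L i j = L' i j"
      proof (cases "i < n \<and> j < n")
        case True
        then show ?thesis
          using fun_cong[OF fun_cong[OF eq, of i], of j] by simp
      next
        case False
        then show ?thesis
          using L L' by (auto simp: latin_square_def)
      qed
    qed
  qed
  moreover have "L i j < n" if "latin_square n L" "i < n" "j < n" for L i j
    using that unfolding latin_square_def by (meson bij_betwE lessThan_iff)
  then have "?restrict ` {L. latin_square n L} \<subseteq> {..<n} \<rightarrow>\<^sub>E {..<n} \<rightarrow>\<^sub>E {..<n}"
    by (intro image_subsetI) (simp add: restrict_PiE_iff)
  ultimately show ?thesis
    by (rule inj_on_finite) (intro finite_PiE finite_lessThan)
qed

lemma card_le_by_isotope: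
  assumes "p permutes {..<n}" "q permutes {..<n}" "l permutes {..<n}"
    and "A \<subseteq> {L. latin_square n L}" "B \<subseteq> {L. latin_square n L}"
    and "isotope n p q l ` A \<subseteq> B"
  shows "card A \<le> card B"
  using assms finite_subset[OF _ finite_latin_squares]
  by (intro card_inj_on_le[OF inj_on_subset[OF inj_on_isotope]]) auto

definition latin_squares_with :: "nat \<Rightarrow> nat \<Rightarrow> nat \<Rightarrow> (nat \<Rightarrow> nat \<Rightarrow> nat) set" where
  "latin_squares_with n r c =
    {L. latin_square n L \<and> card (even_rows n L) = r \<and> card (even_cols n L) = c}"

definition reduced_latin_squares_with :: "nat \<Rightarrow> nat \<Rightarrow> nat \<Rightarrow> (nat \<Rightarrow> nat \<Rightarrow> nat) set" where
  "reduced_latin_squares_with n r c =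
    {L. reduced_latin_square n L \<and> card (even_rows n L) = r \<and> card (even_cols n L) = c}"

definition even_perms :: "nat \<Rightarrow> (nat \<Rightarrow> nat) set" where
  "even_perms n = {p. p permutes {..<n} \<and> evenperm p}"

lemma latin_squares_with_subset: "latin_squares_with n r c \<subseteq> {L. latin_square n L}"
  by (auto simp: latin_squares_with_def)

text \<open>Swapping two columns composes every row with a transposition and fixes every column sign.\<close>

lemma card_latin_squares_with_complement_rows:
  assumes "2 \<le> n" "r \<le> n"
  shows "card (latin_squares_with n (n - r) c) = card (latin_squares_with n r c)"
proof -
  let ?t = "Transposition.transpose (0::nat) 1"
  have t: "?t permutes {..<n}" "\<not> evenperm ?t"
    using assms(1) by (simp_all add: permutes_swap_id evenperm_swap)
  have "card (latin_squares_with n r c) \<le> card (latin_squares_with n (n - r) c)" for r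
    using t by (intro card_le_by_isotope[OF permutes_id t(1) permutes_id latin_squares_with_subset
      latin_squares_with_subset])
      (auto simp: latin_squares_with_def latin_square_isotope card_even_rows_isotope card_even_cols_isotope)
  from this[of r] this[of "n - r"] show ?thesis
    using assms(2) by simp
qed

lemma card_latin_squares_with_complement_cols:
  assumes "2 \<le> n" "c \<le> n"
  shows "card (latin_squares_with n r (n - c)) = card (latin_squares_with n r c)"
proof -
  let ?t = "Transposition.transpose (0::nat) 1"
  have t: "?t permutes {..<n}" "\<not> evenperm ?t"
    using assms(1) by (simp_all add: permutes_swap_id evenperm_swap)
  have "card (latin_squares_with n r c) \<le> card (latin_squares_with n r (n - c))" for c
    using t by (intro card_le_by_isotope[OF t(1) permutes_id permutes_id latin_squares_with_subset
      latin_squares_with_subset])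
      (auto simp: latin_squares_with_def latin_square_isotope card_even_rows_isotope card_even_cols_isotope)
  from this[of c] this[of "n - c"] show ?thesis
    using assms(2) by simp
qed

lemma row_fun_0_reduced:
  "reduced_latin_square n R \<Longrightarrow> row_fun n R 0 = id"
  "reduced_latin_square n R \<Longrightarrow> row_fun n (transposed R) 0 = id"
  by (auto simp: reduced_latin_square_def row_fun_def transposed_def)

lemma first_lines_isotope_reduced:
  assumes R: "reduced_latin_square n R" and n: "0 < n"
    and p: "p permutes {..<n}" "p 0 = 0" and l: "l permutes {..<n}"
  shows "row_fun n (isotope n p id l R) 0 = l"
    and "row_fun n (transposed (isotope n p id l R)) 0 = l \<circ> p"
  using row_fun_isotope[OF permutes_id l n, of p R] row_fun_isotope[OF p(1) l n, of id "transposed R"]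
    row_fun_0_reduced[OF R] p(2)
  by (simp_all add: transposed_isotope)

lemma inj_on_isotope_reduced:
  assumes n: "0 < n"
  shows "inj_on (\<lambda>(R, p, l). isotope n p id l R)
    ({R. reduced_latin_square n R} \<times> {p. p permutes {..<n} \<and> p 0 = 0} \<times> {l. l permutes {..<n}})"
proof (rule inj_onI, clarsimp)
  fix R p l R' p' l'
  assume R: "reduced_latin_square n R" "p permutes {..<n}" "p 0 = 0" "l permutes {..<n}"
    and R': "reduced_latin_square n R'" "p' permutes {..<n}" "p' 0 = 0" "l' permutes {..<n}"
    and eq: "isotope n p id l R = isotope n p' id l' R'"
  have "l = l'" and "l \<circ> p = l' \<circ> p'"
    using first_lines_isotope_reduced[OF R(1) n R(2-4)] first_lines_isotope_reduced[OF R'(1) n R'(2-4)] eq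
    by metis+
  have "p = inv l \<circ> l \<circ> p"
    by (simp add: permutes_inv_o(2)[OF R(4)])
  also have "\<dots> = inv l \<circ> l \<circ> p'"
    using \<open>l \<circ> p = l' \<circ> p'\<close> \<open>l = l'\<close> by (simp add: comp_assoc)
  finally have "p = p'"
    by (simp add: permutes_inv_o(2)[OF R(4)])
  have latin: "latin_square n R" "latin_square n R'"
    using R(1) R'(1) by (simp_all add: reduced_latin_square_def)
  have "R = isotope n (inv p) (inv id) (inv l) (isotope n p id l R)"
    by (rule isotope_inv_isotope[OF latin(1) R(2) permutes_id R(4), symmetric])
  also have "\<dots> = R'"
    using eq \<open>l = l'\<close> \<open>p = p'\<close> isotope_inv_isotope[OF latin(2) R'(2) permutes_id R'(4)] by simp
  finally show "R = R' \<and> p = p' \<and> l = l'"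
    using \<open>l = l'\<close> \<open>p = p'\<close> by simp
qed

lemma latin_square_isotope_reduced:
  assumes L: "latin_square n L" and n: "0 < n"
  obtains R p where "reduced_latin_square n R" "p permutes {..<n}" "p 0 = 0"
    and "L = isotope n p id (row_fun n L 0) R"
proof -
  define l where "l = row_fun n L 0"
  define p where "p = inv l \<circ> row_fun n (transposed L) 0"
  define R where "R = isotope n (inv p) id (inv l) L"
  have l: "l permutes {..<n}"
    unfolding l_def using L n by (rule row_fun_permutes)
  have p: "p permutes {..<n}"
    unfolding p_def using L n l by (intro permutes_compose row_fun_permutes permutes_inv) simp_all
  have first_col: "L i 0 = l (p i)" if "i < n" for i
    using that permutes_inverses(1)[OF l] by (simp add: p_def row_fun_def transposed_def)
  have "l (p 0) = l 0"
    using first_col[OF n] n by (simp add: l_def row_fun_def)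
  then have p0: "p 0 = 0"
    using permutes_inj[OF l] by (simp add: inj_eq)
  have "latin_square n R"
    unfolding R_def using L by (intro latin_square_isotope permutes_inv p l permutes_id)
  moreover have "R 0 j = j" if "j < n" for j
    using that n p0 permutes_inverses(2)[OF l, of j] permutes_inverses(2)[OF p, of 0]
    by (simp add: R_def isotope_def l_def row_fun_def)
  moreover have "R i 0 = i" if "i < n" for i
    using that n first_col[OF permutes_lessThan_less[OF permutes_inv[OF p] that]]
      permutes_inverses(1)[OF p] permutes_inverses(2)[OF l]
    by (simp add: R_def isotope_def)
  moreover have "L = isotope n p id l R"
    unfolding R_def using p l L by (simp add: isotope_isotope permutes_inv_o isotope_id)
  ultimately show ?thesis
    using that[of R p] p p0 by (simp add: reduced_latin_square_def l_def)
qed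

lemma isotope_reduced_in_latin_squares_with_iff:
  assumes R: "reduced_latin_square n R" and n: "0 < n"
    and p: "p permutes {..<n}" "p 0 = 0" and l: "l permutes {..<n}"
  defines "L \<equiv> isotope n p id l R"
  shows "L \<in> latin_squares_with n r c \<and> 0 \<in> even_rows n L \<and> 0 \<in> even_cols n L \<longleftrightarrow>
    R \<in> reduced_latin_squares_with n r c \<and> evenperm p \<and> evenperm l"
proof -
  have latin: "latin_square n R" "latin_square n L"
    using R p l by (simp_all add: L_def reduced_latin_square_def latin_square_isotope)
  have "0 \<in> even_rows n L \<longleftrightarrow> evenperm l"
    using first_lines_isotope_reduced(1)[OF R n p l] n by (simp add: L_def even_rows_def)
  moreover have "0 \<in> even_cols n L \<longleftrightarrow> (evenperm l \<longleftrightarrow> evenperm p)"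
    using first_lines_isotope_reduced(2)[OF R n p l] n p l
    by (simp add: L_def even_cols_def even_rows_def evenperm_comp permutes_lessThan_permutation)
  moreover have "card (even_rows n L) = card (even_rows n R)" "card (even_cols n L) = card (even_cols n R)"
    if "evenperm l" "evenperm p"
    using that latin(1) p(1) l by (simp_all add: L_def card_even_rows_isotope card_even_cols_isotope)
  ultimately show ?thesis
    using R latin(2)
    by (auto simp: latin_squares_with_def reduced_latin_squares_with_def)
qed

lemma isotope_reduced_image:
  assumes n: "0 < n"
  shows "(\<lambda>(R, p, l). isotope n p id l R) `
      (reduced_latin_squares_with n r c \<times> {p \<in> even_perms n. p 0 = 0} \<times> even_perms n) =
    {L \<in> latin_squares_with n r c. 0 \<in> even_rows n L \<and> 0 \<in> even_cols n L}"
    (is "?g ` ?D = ?X")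
proof
  show "?g ` ?D \<subseteq> ?X"
  proof (rule image_subsetI)
    fix x assume "x \<in> ?D"
    then obtain R p l where x: "x = (R, p, l)" and R: "R \<in> reduced_latin_squares_with n r c"
      and p: "p permutes {..<n}" "evenperm p" "p 0 = 0" and l: "l permutes {..<n}" "evenperm l"
      by (auto simp: even_perms_def)
    have "reduced_latin_square n R"
      using R by (simp add: reduced_latin_squares_with_def)
    then show "?g x \<in> ?X"
      using isotope_reduced_in_latin_squares_with_iff[OF _ n p(1,3) l(1), of R r c] x R p(2) l(2)
      by simp
  qed
  show "?X \<subseteq> ?g ` ?D"
  proof
    fix L assume L: "L \<in> ?X"
    then have latin: "latin_square n L"
      by (simp add: latin_squares_with_def)
    define l where "l = row_fun n L 0"
    obtain R p where R: "reduced_latin_square n R" "p permutes {..<n}" "p 0 = 0"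
      and L_eq: "L = isotope n p id l R"
      using latin_square_isotope_reduced[OF latin n] unfolding l_def by blast
    have l: "l permutes {..<n}"
      unfolding l_def using latin n by (rule row_fun_permutes)
    have "R \<in> reduced_latin_squares_with n r c \<and> evenperm p \<and> evenperm l"
      using isotope_reduced_in_latin_squares_with_iff[OF R(1) n R(2,3) l, of r c] L
      unfolding L_eq[symmetric] by simp
    then have "(R, p, l) \<in> ?D"
      using R l by (simp add: even_perms_def)
    then show "L \<in> ?g ` ?D"
      unfolding L_eq by (rule rev_image_eqI) simp
  qed
qed

lemma card_latin_squares_with_even_first_lines:
  assumes n: "0 < n"
  shows "card {L \<in> latin_squares_with n r c. 0 \<in> even_rows n L \<and> 0 \<in> even_cols n L} =
    card (reduced_latin_squares_with n r c) * card {p \<in> even_perms n. p 0 = 0} * card (even_perms n)"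
proof -
  have "inj_on (\<lambda>(R, p, l). isotope n p id l R)
      (reduced_latin_squares_with n r c \<times> {p \<in> even_perms n. p 0 = 0} \<times> even_perms n)"
    by (rule inj_on_subset[OF inj_on_isotope_reduced[OF n]])
      (auto simp: reduced_latin_squares_with_def even_perms_def)
  from card_image[OF this] show ?thesis
    by (simp add: isotope_reduced_image[OF n] card_cartesian_product)
qed

text \<open>For \<open>n = 2\<close> the only even permutation is the identity, and the double count below fails.\<close>

lemma even_perm_sending_0:
  fixes n :: nat
  assumes "n \<noteq> 2" "a < n"
  obtains p where "p permutes {..<n}" "evenperm p" "p 0 = a"
proof (cases "a = 0")
  case True
  then show ?thesis
    using that[of id] by simp
next
  case False
  define d where "d = (if a = 1 then 2 else 1 :: nat)"
  have d: "d < n" "d \<noteq> 0" "d \<noteq> a"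
    using assms False by (auto simp: d_def)
  let ?p = "Transposition.transpose 0 a \<circ> Transposition.transpose a d"
  have "?p permutes {..<n}"
    using assms d by (intro permutes_compose permutes_swap_id) auto
  moreover have "evenperm ?p"
    using False d by (simp add: evenperm_comp permutation_swap_id evenperm_swap)
  moreover have "?p 0 = a"
    using False d by simp
  ultimately show ?thesis
    by (rule that)
qed

lemma isotope_even_lines_subset:
  assumes p: "p permutes {..<n}" "evenperm p" and q: "q permutes {..<n}" "evenperm q"
    and "a < n" "b < n"
  shows "isotope n p q id ` {L \<in> latin_squares_with n r c. p a \<in> even_rows n L \<and> q b \<in> even_cols n L}
    \<subseteq> {L \<in> latin_squares_with n r c. a \<in> even_rows n L \<and> b \<in> even_cols n L}"
  using assms
  by (auto simp: latin_squares_with_def latin_square_isotope in_even_rows_isotope in_even_cols_isotope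
    card_even_rows_isotope card_even_cols_isotope)

lemma card_latin_squares_with_even_lines:
  assumes n: "n \<noteq> 2" and "a < n" "b < n"
  shows "card {L \<in> latin_squares_with n r c. a \<in> even_rows n L \<and> b \<in> even_cols n L} =
    card {L \<in> latin_squares_with n r c. 0 \<in> even_rows n L \<and> 0 \<in> even_cols n L}"
    (is "card (?X a b) = card (?X 0 0)")
proof -
  obtain p where p: "p permutes {..<n}" "evenperm p" "p 0 = a"
    using even_perm_sending_0[OF n \<open>a < n\<close>] .
  obtain q where q: "q permutes {..<n}" "evenperm q" "q 0 = b"
    using even_perm_sending_0[OF n \<open>b < n\<close>] .
  have inv_p: "inv p permutes {..<n}" "evenperm (inv p)" "inv p a = 0"
    using p permutes_inv permutes_inverses(2)[OF p(1), of 0]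
    by (auto simp: evenperm_inv permutes_lessThan_permutation)
  have inv_q: "inv q permutes {..<n}" "evenperm (inv q)" "inv q b = 0"
    using q permutes_inv permutes_inverses(2)[OF q(1), of 0]
    by (auto simp: evenperm_inv permutes_lessThan_permutation)
  have "0 < n"
    using \<open>a < n\<close> by simp
  have subsets: "?X x y \<subseteq> {L. latin_square n L}" for x y
    using latin_squares_with_subset by blast
  have "card (?X a b) \<le> card (?X 0 0)"
    using isotope_even_lines_subset[OF p(1,2) q(1,2) \<open>0 < n\<close> \<open>0 < n\<close>] p(3) q(3)
    by (intro card_le_by_isotope[OF p(1) q(1) permutes_id subsets subsets]) simp
  moreover have "card (?X 0 0) \<le> card (?X a b)"
    using isotope_even_lines_subset[OF inv_p(1,2) inv_q(1,2) assms(2,3)] inv_p(3) inv_q(3)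
    by (intro card_le_by_isotope[OF inv_p(1) inv_q(1) permutes_id subsets subsets]) simp
  ultimately show ?thesis
    by simp
qed

lemma sum_card_Collect_pairs:
  assumes "finite Y" "finite A" "finite B"
    and "\<And>y. y \<in> Y \<Longrightarrow> R y \<subseteq> A" "\<And>y. y \<in> Y \<Longrightarrow> C y \<subseteq> B"
  shows "(\<Sum>a\<in>A. \<Sum>b\<in>B. card {y \<in> Y. a \<in> R y \<and> b \<in> C y}) = (\<Sum>y\<in>Y. card (R y) * card (C y))"
proof -
  have "(\<Sum>a\<in>A. \<Sum>b\<in>B. card {y \<in> Y. a \<in> R y \<and> b \<in> C y}) =
      (\<Sum>a\<in>A. \<Sum>b\<in>B. \<Sum>y\<in>Y. of_bool (a \<in> R y) * of_bool (b \<in> C y))"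
    using assms(1) by (simp add: sum_of_bool_eq Int_def)
  also have "\<dots> = (\<Sum>a\<in>A. \<Sum>y\<in>Y. \<Sum>b\<in>B. of_bool (a \<in> R y) * of_bool (b \<in> C y))"
    by (intro sum.cong refl sum.swap)
  also have "\<dots> = (\<Sum>y\<in>Y. \<Sum>a\<in>A. \<Sum>b\<in>B. of_bool (a \<in> R y) * of_bool (b \<in> C y))"
    by (rule sum.swap)
  also have "\<dots> = (\<Sum>y\<in>Y. (\<Sum>a\<in>A. of_bool (a \<in> R y)) * (\<Sum>b\<in>B. of_bool (b \<in> C y)))"
    by (simp add: sum_product)
  also have "\<dots> = (\<Sum>y\<in>Y. card (R y) * card (C y))"
  proof (intro sum.cong refl)
    fix y assume "y \<in> Y"
    then have "A \<inter> {a. a \<in> R y} = R y" "B \<inter> {b. b \<in> C y} = C y"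
      using assms(4,5) by auto
    then show "(\<Sum>a\<in>A. of_bool (a \<in> R y)) * (\<Sum>b\<in>B. of_bool (b \<in> C y)) = card (R y) * card (C y)"
      using assms(2,3) by (simp add: sum_of_bool_eq)
  qed
  finally show ?thesis .
qed

lemma card_latin_squares_with_double_count:
  assumes "n \<noteq> 2"
  shows "n * n * card {L \<in> latin_squares_with n r c. 0 \<in> even_rows n L \<and> 0 \<in> even_cols n L} =
    card (latin_squares_with n r c) * r * c"
proof -
  let ?Y = "latin_squares_with n r c"
  have "n * n * card {L \<in> ?Y. 0 \<in> even_rows n L \<and> 0 \<in> even_cols n L} =
      (\<Sum>a<n. \<Sum>b<n. card {L \<in> ?Y. 0 \<in> even_rows n L \<and> 0 \<in> even_cols n L})"
    by simp
  also have "\<dots> = (\<Sum>a<n. \<Sum>b<n. card {L \<in> ?Y. a \<in> even_rows n L \<and> b \<in> even_cols n L})"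
    using assms by (intro sum.cong refl card_latin_squares_with_even_lines[symmetric]) auto
  also have "\<dots> = (\<Sum>L\<in>?Y. card (even_rows n L) * card (even_cols n L))"
    using finite_subset[OF latin_squares_with_subset finite_latin_squares]
    by (rule sum_card_Collect_pairs) (simp_all add: even_rows_subset even_cols_def)
  also have "\<dots> = card ?Y * r * c"
    by (simp add: latin_squares_with_def)
  finally show ?thesis .
qed

lemma finite_even_perms: "finite (even_perms n)"
  using finite_subset[OF _ finite_permutations[of "{..<n}"]] by (auto simp: even_perms_def)

lemma card_reduced_latin_squares_with:
  assumes "n \<noteq> 2" "0 < n"
  shows "n * n * card {p \<in> even_perms n. p 0 = 0} * card (even_perms n) *
      card (reduced_latin_squares_with n r c) = card (latin_squares_with n r c) * r * c"
proof -
  have "n * n * card {p \<in> even_perms n. p 0 = 0} * card (even_perms n) *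
      card (reduced_latin_squares_with n r c) =
      n * n * card {L \<in> latin_squares_with n r c. 0 \<in> even_rows n L \<and> 0 \<in> even_cols n L}"
    by (simp only: card_latin_squares_with_even_first_lines[OF assms(2)] mult_ac)
  also have "\<dots> = card (latin_squares_with n r c) * r * c"
    by (rule card_latin_squares_with_double_count[OF assms(1)])
  finally show ?thesis .
qed

lemma finite_reduced_latin_squares_with: "finite (reduced_latin_squares_with n r c)"
  by (rule finite_subset[OF _ finite_latin_squares])
    (auto simp: reduced_latin_squares_with_def reduced_latin_square_def)

lemma card_reduced_latin_squares_by_types:
  assumes "finite S"
  shows "card {L. reduced_latin_square n L \<and> (card (even_rows n L), card (even_cols n L)) \<in> S} =
    (\<Sum>(r, c)\<in>S. card (reduced_latin_squares_with n r c))"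
proof -
  have "{L. reduced_latin_square n L \<and> (card (even_rows n L), card (even_cols n L)) \<in> S} =
      (\<Union>(r, c)\<in>S. reduced_latin_squares_with n r c)"
    by (auto simp: reduced_latin_squares_with_def)
  moreover have "card (\<Union>(r, c)\<in>S. reduced_latin_squares_with n r c) =
      (\<Sum>(r, c)\<in>S. card (reduced_latin_squares_with n r c))"
  proof (subst card_UN_disjoint)
    show "\<forall>i\<in>S. \<forall>j\<in>S. i \<noteq> j \<longrightarrow>
        (case i of (r, c) \<Rightarrow> reduced_latin_squares_with n r c) \<inter>
        (case j of (r, c) \<Rightarrow> reduced_latin_squares_with n r c) = {}"
      by (auto simp: reduced_latin_squares_with_def)
  qed (simp_all add: assms finite_reduced_latin_squares_with case_prod_beta)
  ultimately show ?thesis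
    by simp
qed

section \<open>Parity types\<close>

lemma card_latin_squares_with_complements:
  assumes "2 \<le> n" "k \<le> n" "m \<le> n" "(r, c) \<in> {k, n - k} \<times> {m, n - m}"
  shows "card (latin_squares_with n r c) = card (latin_squares_with n k m)"
  using assms card_latin_squares_with_complement_rows[OF assms(1,2)]
    card_latin_squares_with_complement_cols[OF assms(1,3)]
    card_latin_squares_with_complement_cols[OF assms(1,3), of "n - k"]
  by auto

lemma scaled_card_reduced_latin_squares_by_types:
  assumes "3 \<le> n" "k \<le> n" "m \<le> n" "S \<subseteq> {k, n - k} \<times> {m, n - m}"
  shows "n * n * card {p \<in> even_perms n. p 0 = 0} * card (even_perms n) *
      card {L. reduced_latin_square n L \<and> (card (even_rows n L), card (even_cols n L)) \<in> S} =
    card (latin_squares_with n k m) * (\<Sum>(r, c)\<in>S. r * c)"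
proof -
  let ?d = "n * n * card {p \<in> even_perms n. p 0 = 0} * card (even_perms n)"
  have S: "finite S"
    using assms(4) by (rule finite_subset) simp
  have "?d * card {L. reduced_latin_square n L \<and> (card (even_rows n L), card (even_cols n L)) \<in> S} =
      (\<Sum>(r, c)\<in>S. ?d * card (reduced_latin_squares_with n r c))"
    by (simp add: card_reduced_latin_squares_by_types[OF S] sum_distrib_left split_def)
  also have "\<dots> = (\<Sum>(r, c)\<in>S. card (latin_squares_with n k m) * (r * c))"
  proof (intro sum.cong refl, clarify)
    fix r c assume "(r, c) \<in> S"
    then have "card (latin_squares_with n r c) = card (latin_squares_with n k m)"
      using assms by (intro card_latin_squares_with_complements) auto
    moreover have "?d * card (reduced_latin_squares_with n r c) = card (latin_squares_with n r c) * r * c"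
      using assms(1) by (intro card_reduced_latin_squares_with) auto
    ultimately show "?d * card (reduced_latin_squares_with n r c) = card (latin_squares_with n k m) * (r * c)"
      by simp
  qed
  also have "\<dots> = card (latin_squares_with n k m) * (\<Sum>(r, c)\<in>S. r * c)"
    by (simp add: sum_distrib_left split_def)
  finally show ?thesis .
qed

lemma sum_parity_type_pairs:
  fixes n k m :: nat
  assumes "odd n" "k \<le> n" "m \<le> n"
  shows "(\<Sum>(r, c)\<in>{k, n - k} \<times> {m, n - m}. r * c) = n * n"
proof -
  have "k \<noteq> n - k" "m \<noteq> n - m"
    using assms by presburger+
  then have "(\<Sum>r\<in>{k, n - k}. r) * (\<Sum>c\<in>{m, n - m}. c) = n * n"
    using assms by simp
  then show ?thesis
    by (simp add: sum_product sum.cartesian_product)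
qed

lemma sum_even_parity_type_pairs:
  fixes n k m :: nat
  assumes "odd n" "k \<le> n" "m \<le> n"
  shows "(\<Sum>(r, c)\<in>{rc \<in> {k, n - k} \<times> {m, n - m}. even (fst rc + snd rc)}. r * c) =
    (if even (k + m) then k * m + (n - k) * (n - m) else k * (n - m) + m * (n - k))"
proof -
  have "k \<noteq> n - k" "m \<noteq> n - m"
    using assms by presburger+
  moreover have "{rc \<in> {k, n - k} \<times> {m, n - m}. even (fst rc + snd rc)} =
      (if even (k + m) then {(k, m), (n - k, n - m)} else {(n - k, m), (k, n - m)})"
    using assms by auto
  ultimately show ?thesis
    by (simp add: mult.commute)
qed

lemma ratio_of_common_multiples:
  fixes a b d t x y :: nat
  assumes "d * a = t * x" "d * b = t * y" "0 < d" "0 < y"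
  shows "real a = real x / real y * real b"
proof -
  have "real d * real a = real t * real x" "real d * real b = real t * real y"
    using assms(1,2) of_nat_mult by metis+
  then have "real a = real t * real x / real d" "real b = real t * real y / real d"
    using assms(3) by (simp_all add: field_simps)
  then show ?thesis
    using assms(4) by simp
qed

lemma even_latin_square_order_1:
  assumes "latin_square 1 L"
  shows "even_latin_square 1 L"
proof -
  have "even_rows 1 L' = {0}" if "latin_square 1 L'" for L'
    using row_fun_permutes[OF that, of 0] by (auto simp: even_rows_def lessThan_Suc permutes_sing)
  then show ?thesis
    using assms by (simp add: even_latin_square_iff even_cols_def)
qed

lemma card_reduced_parity_type_scaled:
  fixes n k m :: nat
  assumes "odd n" "3 \<le> n" "k \<le> n" "m \<le> n"
  defines "d \<equiv> n * n * card {p \<in> even_perms n. p 0 = 0} * card (even_perms n)"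
    and "t \<equiv> card (latin_squares_with n k m)"
  shows "d * card {L. reduced_latin_square n L \<and> parity_type n L k m} = t * n\<^sup>2"
    and "d * card {L. reduced_latin_square n L \<and> parity_type n L k m \<and> even_latin_square n L} =
      t * (if even (k + m) then k * m + (n - k) * (n - m) else k * (n - m) + m * (n - k))"
proof -
  let ?P = "{k, n - k} \<times> {m, n - m}"
  have "{L. reduced_latin_square n L \<and> parity_type n L k m} =
      {L. reduced_latin_square n L \<and> (card (even_rows n L), card (even_cols n L)) \<in> ?P}"
    by (auto simp: parity_type_iff reduced_latin_square_def)
  then show "d * card {L. reduced_latin_square n L \<and> parity_type n L k m} = t * n\<^sup>2"
    using scaled_card_reduced_latin_squares_by_types[OF assms(2-4), of ?P]
      sum_parity_type_pairs[OF assms(1,3,4)]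
    unfolding d_def t_def power2_eq_square by (simp only: order_refl)
  have "{L. reduced_latin_square n L \<and> parity_type n L k m \<and> even_latin_square n L} =
      {L. reduced_latin_square n L \<and>
        (card (even_rows n L), card (even_cols n L)) \<in> {rc \<in> ?P. even (fst rc + snd rc)}}"
    by (auto simp: parity_type_iff even_latin_square_iff reduced_latin_square_def)
  then show "d * card {L. reduced_latin_square n L \<and> parity_type n L k m \<and> even_latin_square n L} =
      t * (if even (k + m) then k * m + (n - k) * (n - m) else k * (n - m) + m * (n - k))"
    using scaled_card_reduced_latin_squares_by_types[OF assms(2-4), of "{rc \<in> ?P. even (fst rc + snd rc)}"]
      sum_even_parity_type_pairs[OF assms(1,3,4)]
    unfolding d_def t_def by (simp only: mem_Collect_eq subset_iff, blast)
qed

lemma card_even_perms_pos: "0 < card {p \<in> even_perms n. p 0 = 0} * card (even_perms n)"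
proof -
  have "finite {p \<in> even_perms n. p 0 = 0}"
    by (rule finite_subset[OF _ finite_even_perms]) auto
  moreover have "id \<in> {p \<in> even_perms n. p 0 = 0}" "id \<in> even_perms n"
    by (simp_all add: even_perms_def)
  ultimately show ?thesis
    using finite_even_perms by (auto simp: card_gt_0_iff)
qed

theorem corollary3p2:
  fixes n k m :: nat
  assumes "odd n" and "2 * k \<le> n" and "2 * m \<le> n"
  defines "N \<equiv> card {L. reduced_latin_square n L \<and> parity_type n L k m}"
  defines "E \<equiv> card {L. reduced_latin_square n L \<and> parity_type n L k m \<and> even_latin_square n L}"
  shows "(even (k + m) \<longrightarrow>
            real E = (real (k * m + (n - k) * (n - m)) / real (n ^ 2)) * real N) \<and>
         (odd (k + m) \<longrightarrow>
            real E = (real (k * (n - m) + m * (n - k)) / real (n ^ 2)) * real N)"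
proof (cases "n = 1")
  case True
  then have "E = N"
    unfolding E_def N_def using even_latin_square_order_1
    by (intro arg_cong[where f = card] Collect_cong) (auto simp: reduced_latin_square_def)
  moreover have "k = 0" "m = 0"
    using True assms(2,3) by auto
  ultimately show ?thesis
    using True by simp
next
  case False
  then have "3 \<le> n"
    using \<open>odd n\<close> by presburger
  moreover have "k \<le> n" "m \<le> n"
    using assms(2,3) by auto
  ultimately have "real E = real (if even (k + m) then k * m + (n - k) * (n - m) else k * (n - m) + m * (n - k))
      / real (n\<^sup>2) * real N"
    using card_reduced_parity_type_scaled[OF \<open>odd n\<close>] card_even_perms_pos[of n] unfolding E_def N_def
    by (intro ratio_of_common_multiples) (auto simp: mult_pos_pos)
  then show ?thesis
    by (cases "even (k + m)") (simp_all only: if_True if_False simp_thms)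
qed

end
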